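(* Let $\omega$ be a weight function whose associated weight matrix $\{W^x\}_{x>0}$ satisfies $$\forall x>0\ \exists y>0\ \exists A>0\ \forall k\ge1:\ \vartheta^x_k\le A\,(W^y_k)^{1/k}.$$ Then $\omega$ is good if and only if $\omega$ is equivalent to its least concave majorant.
   Context: A weight function is a continuous increasing $\omega:[0,\infty)\to[0,\infty)$ with $\omega(0)=0$, $\omega(t)\to\infty$, $\omega(2t)=O(\omega(t))$, $\omega(t)=O(t)$, $\log t=o(\omega(t))$, and $\varphi(t)=\omega(e^t)$ convex; normalized with $\omega|_{[0,1]}=0$, $\varphi^*(t)=\sup_{s\ge0}(st-\varphi(s))$, weight matrix $W^x_k=\exp(\frac1x\varphi^*(xk))$, $\vartheta^x_k=W^x_k/W^x_{k-1}$. $\omega$ is good if $\forall x>0\ \exists y>0\ \exists C\ge1\ \forall 1\le j\le k:\ \vartheta^x_j/j\le C\vartheta^y_k/k$. Two functions $\omega,\sigma$ are equivalent if $\omega=O(\sigma)$ and $\sigma=O(\omega)$ as $t\to\infty$. *)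

theory Defs
  imports "HOL-Analysis.Analysis" "HOL-Library.Landau_Symbols"
begin

definition weight_function :: "(real \<Rightarrow> real) \<Rightarrow> bool" where
  "weight_function \<omega> \<longleftrightarrow>
     continuous_on {0..} \<omega> \<and>
     mono_on {0..} \<omega> \<and>
     (\<forall>t\<ge>0. \<omega> t \<ge> 0) \<and>
     \<omega> 0 = 0 \<and>
     filterlim \<omega> at_top at_top \<and>
     (\<lambda>t. \<omega> (2 * t)) \<in> O[at_top](\<omega>) \<and>
     \<omega> \<in> O[at_top](\<lambda>t. t) \<and>
     (\<lambda>t. ln t) \<in> o[at_top](\<omega>) \<and>
     convex_on UNIV (\<lambda>t. \<omega> (exp t))"

definition normalized_weight :: "(real \<Rightarrow> real) \<Rightarrow> bool" where
  "normalized_weight \<omega> \<longleftrightarrow> (\<forall>t\<in>{0..1}. \<omega> t = 0)"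

definition wphi :: "(real \<Rightarrow> real) \<Rightarrow> real \<Rightarrow> real" where
  "wphi \<omega> t = \<omega> (exp t)"

definition wphi_star :: "(real \<Rightarrow> real) \<Rightarrow> real \<Rightarrow> real" where
  "wphi_star \<omega> t = (SUP s\<in>{0..}. s * t - wphi \<omega> s)"

definition W :: "(real \<Rightarrow> real) \<Rightarrow> real \<Rightarrow> nat \<Rightarrow> real" where
  "W \<omega> x k = exp (wphi_star \<omega> (x * real k) / x)"

text \<open>Quotients vartheta^x_k = W^x_k / W^x_(k-1) (used for k >= 1).\<close>
definition vartheta :: "(real \<Rightarrow> real) \<Rightarrow> real \<Rightarrow> nat \<Rightarrow> real" where
  "vartheta \<omega> x k = W \<omega> x k / W \<omega> x (k - 1)"

definition good_weight :: "(real \<Rightarrow> real) \<Rightarrow> bool" where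
  "good_weight \<omega> \<longleftrightarrow>
     (\<forall>x>0. \<exists>y>0. \<exists>C\<ge>1. \<forall>j k. 1 \<le> j \<and> j \<le> k \<longrightarrow>
        vartheta \<omega> x j / real j \<le> C * vartheta \<omega> y k / real k)"

definition least_concave_majorant :: "(real \<Rightarrow> real) \<Rightarrow> real \<Rightarrow> real" where
  "least_concave_majorant \<omega> t =
     Inf {g t | g. concave_on {0..} g \<and> (\<forall>s\<ge>0. \<omega> s \<le> g s)}"

definition equivalent_weights :: "(real \<Rightarrow> real) \<Rightarrow> (real \<Rightarrow> real) \<Rightarrow> bool" where
  "equivalent_weights \<omega> \<sigma> \<longleftrightarrow> \<omega> \<in> O[at_top](\<sigma>) \<and> \<sigma> \<in> O[at_top](\<omega>)"

end

theory Submission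
  imports Defs
begin

text \<open>
  Write phi(s) = omega(e^s) and psi = phi*. Then log vartheta^x_k = (psi(xk) - psi(x(k-1)))/x is
  increasing in k and dominates psi(xk)/(xk). Equivalence of omega with its least concave majorant
  is the dilation bound omega(l t) <= C l omega(t), which by Young duality is equivalent to the
  growth condition psi(l t)/(l t) >= psi(t)/t + ln l - c. In logarithmic form goodness reads
  log vartheta^x_j - ln j <= c + log vartheta^y_k - ln k; summing this over blocks of indices
  telescopes to the growth condition. Conversely the hypothesis says
  log vartheta^x_k <= ln A + psi(yk)/(yk), and the growth condition moves psi(yk)/(yk) up to
  larger indices.
\<close>

lemma convex_on_UNIV_subgradient:
  fixes f :: "real \<Rightarrow> real"
  assumes "convex_on UNIV f"
  shows "\<exists>g. \<forall>s. f R + g * (s - R) \<le> f s"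
proof -
  have slope: "(f R - f s) / (R - s) \<le> (f u - f R) / (u - R)" if "s < R" "R < u" for s u
  proof -
    have "(f s - f R) / (s - R) \<le> (f s - f u) / (s - u)"
      by (rule convex_on_slope_le(1)[OF assms]) (use that in auto)
    also have "\<dots> \<le> (f R - f u) / (R - u)"
      by (rule convex_on_slope_le(2)[OF assms]) (use that in auto)
    finally show ?thesis
      by (metis minus_diff_eq minus_divide_divide)
  qed
  define S where "S = (\<lambda>s. (f R - f s) / (R - s)) ` {..<R}"
  have "S \<noteq> {}"
    unfolding S_def by auto
  have "bdd_above S"
    unfolding S_def using slope[of _ "R + 1"] by (auto intro!: bdd_aboveI)
  have "f R + Sup S * (s - R) \<le> f s" for s
  proof (cases s R rule: linorder_cases)
    case less
    have "(f R - f s) / (R - s) \<le> Sup S"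
      by (rule cSup_upper[OF _ \<open>bdd_above S\<close>]) (use less in \<open>auto simp: S_def\<close>)
    with less show ?thesis
      by (simp add: divide_le_eq algebra_simps)
  next
    case greater
    have "Sup S \<le> (f s - f R) / (s - R)"
      by (rule cSup_least[OF \<open>S \<noteq> {}\<close>]) (use greater slope in \<open>auto simp: S_def\<close>)
    with greater show ?thesis
      by (simp add: le_divide_eq algebra_simps)
  qed simp
  then show ?thesis
    by blast
qed

lemma neg_mult_ln_le: "0 < (\<theta>::real) \<Longrightarrow> - (\<theta> * ln \<theta>) \<le> 1 - \<theta>"
  using ln_le_minus_one[of "1 / \<theta>"] mult_left_mono[of "ln (1 / \<theta>)" "1 / \<theta> - 1" \<theta>]
  by (simp add: ln_div algebra_simps)

lemma sum_ln_Suc_ge: "real n * ln (real n) - real n \<le> (\<Sum>i<n. ln (real (Suc i)))"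
proof (induction n)
  case (Suc n)
  have "real n * ln (real n + 1) \<le> real n * ln (real n) + 1"
  proof (cases "n = 0")
    case False
    then have "ln (real n + 1) - ln (real n) \<le> 1 / real n"
      using ln_le_minus_one[of "(real n + 1) / real n"] by (simp add: ln_div field_simps)
    then have "real n * (ln (real n + 1) - ln (real n)) \<le> real n * (1 / real n)"
      by (rule mult_left_mono) simp
    with False show ?thesis
      by (simp add: algebra_simps)
  qed simp
  with Suc show ?case
    by (simp add: algebra_simps)
qed simp

lemma exists_lattice_point_below:
  fixes t l y :: real
  assumes "1 \<le> t" "0 < y" "4 * y \<le> l"
  shows "\<exists>k n. 1 \<le> k \<and> 1 \<le> n \<and> t \<le> real k \<and> y * real (k * n) \<le> l * t \<and> l / (4 * y) \<le> real n"
proof -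
  define k where "k = nat \<lceil>t\<rceil>"
  have "t \<le> real k" "real k \<le> 2 * t" "1 \<le> k"
    using assms(1) unfolding k_def by linarith+
  define q where "q = l * t / (y * real k)"
  have "l / (2 * y) = l * t / (y * (2 * t))"
    using assms(1) by simp
  also have "\<dots> \<le> q"
    unfolding q_def using \<open>real k \<le> 2 * t\<close> \<open>1 \<le> k\<close> assms
    by (intro divide_left_mono mult_left_mono) auto
  finally have "l / (2 * y) \<le> q" .
  moreover have "2 \<le> l / (2 * y)"
    using assms(2,3) by (simp add: le_divide_eq)
  ultimately have "2 \<le> q"
    by linarith
  define n where "n = nat \<lfloor>q\<rfloor>"
  have "real n \<le> q" "q - 1 \<le> real n" "1 \<le> n"
    using \<open>2 \<le> q\<close> unfolding n_def by linarith+
  have "y * real k * real n \<le> y * real k * q"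
    using \<open>real n \<le> q\<close> assms(2) by (intro mult_left_mono) auto
  also have "y * real k * q = l * t"
    unfolding q_def using \<open>1 \<le> k\<close> assms(2) by simp
  finally have "y * real (k * n) \<le> l * t"
    by (simp add: mult.assoc)
  moreover have "l / (4 * y) \<le> real n"
    using \<open>q - 1 \<le> real n\<close> \<open>l / (2 * y) \<le> q\<close> \<open>2 \<le> q\<close> by (simp add: field_simps)
  ultimately show ?thesis
    using \<open>1 \<le> k\<close> \<open>1 \<le> n\<close> \<open>t \<le> real k\<close> by blast
qed

lemma concave_on_affine: "concave_on {0..} (\<lambda>t. a + b * t :: real)"
  by (rule concave_on_linorderI) (auto simp: algebra_simps)

lemma concave_on_dilate_le:
  fixes g :: "real \<Rightarrow> real"
  assumes "concave_on {0..} g" "0 \<le> g 0" "0 \<le> t" "1 \<le> l"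
  shows "g (l * t) \<le> l * g t"
proof -
  have "(1 - 1 / l) * g 0 + (1 / l) * g (l * t) \<le> g ((1 - 1 / l) *\<^sub>R 0 + (1 / l) *\<^sub>R (l * t))"
    using assms by (intro concave_onD) auto
  also have "(1 - 1 / l) *\<^sub>R 0 + (1 / l) *\<^sub>R (l * t) = t"
    using assms by simp
  finally have "(1 / l) * g (l * t) \<le> g t"
    using assms(2,4) by (smt (verit) divide_le_eq_1 mult_nonneg_nonneg)
  with assms(4) show ?thesis
    by (simp add: field_simps)
qed

lemma le_least_concave_majorant:
  fixes f :: "real \<Rightarrow> real"
  assumes "\<And>s. 0 \<le> s \<Longrightarrow> f s \<le> a + b * s" "0 \<le> t"
  shows "f t \<le> least_concave_majorant f t"
  unfolding least_concave_majorant_def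
  by (rule cInf_greatest) (use assms in \<open>auto intro!: exI[of _ "\<lambda>s. a + b * s"] concave_on_affine\<close>)

lemma least_concave_majorant_le:
  fixes f g :: "real \<Rightarrow> real"
  assumes "concave_on {0..} g" "\<forall>s\<ge>0. f s \<le> g s" "0 \<le> t"
  shows "least_concave_majorant f t \<le> g t"
  unfolding least_concave_majorant_def
  by (rule cInf_lower) (use assms in \<open>auto intro!: bdd_belowI[of _ "f t"]\<close>)

lemma dilate_le_least_concave_majorant:
  fixes f :: "real \<Rightarrow> real"
  assumes "\<And>s. 0 \<le> s \<Longrightarrow> 0 \<le> f s" "\<And>s. 0 \<le> s \<Longrightarrow> f s \<le> a + b * s" "0 \<le> t" "1 \<le> l"
  shows "f (l * t) \<le> l * least_concave_majorant f t"
proof -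
  have "f (l * t) / l \<le> least_concave_majorant f t"
    unfolding least_concave_majorant_def
  proof (rule cInf_greatest)
    fix z assume "z \<in> {g t |g. concave_on {0..} g \<and> (\<forall>s\<ge>0. f s \<le> g s)}"
    then obtain g where g: "z = g t" "concave_on {0..} g" "\<forall>s\<ge>0. f s \<le> g s"
      by blast
    have "f (l * t) \<le> g (l * t)"
      using g(3) assms(3,4) by simp
    also have "\<dots> \<le> l * g t"
      using g(2,3) assms by (intro concave_on_dilate_le) (auto intro: order_trans)
    finally show "f (l * t) / l \<le> z"
      using g(1) assms(4) by (simp add: divide_le_eq mult.commute)
  qed (use assms in \<open>auto intro!: exI[of _ "\<lambda>s. a + b * s"] concave_on_affine\<close>)
  with assms(4) show ?thesis
    by (simp add: divide_le_eq mult.commute)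
qed

definition dilation_bounded :: "(real \<Rightarrow> real) \<Rightarrow> bool" where
  "dilation_bounded f \<longleftrightarrow> (\<exists>C>0. \<exists>t\<^sub>0. \<forall>t\<ge>t\<^sub>0. \<forall>l\<ge>1. f (l * t) \<le> C * l * f t)"

lemma dilation_bounded_if_equivalent_least_concave_majorant:
  fixes f :: "real \<Rightarrow> real"
  assumes "\<And>s. 0 \<le> s \<Longrightarrow> 0 \<le> f s" "\<And>s. 0 \<le> s \<Longrightarrow> f s \<le> a + b * s"
    and "equivalent_weights f (least_concave_majorant f)"
  shows "dilation_bounded f"
proof -
  obtain C where "C > 0" and "\<forall>\<^sub>F t in at_top. norm (least_concave_majorant f t) \<le> C * norm (f t)"
    using assms(3) unfolding equivalent_weights_def by (auto elim: landau_o.bigE)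
  then obtain t\<^sub>0 where t\<^sub>0: "\<And>t. t \<ge> t\<^sub>0 \<Longrightarrow> norm (least_concave_majorant f t) \<le> C * norm (f t)"
    by (auto simp: eventually_at_top_linorder)
  have "f (l * t) \<le> C * l * f t" if "t \<ge> max t\<^sub>0 0" "l \<ge> 1" for t l
  proof -
    have "f t \<le> least_concave_majorant f t"
      using that by (intro le_least_concave_majorant[OF assms(2)]) auto
    with t\<^sub>0[of t] assms(1)[of t] that have "least_concave_majorant f t \<le> C * f t"
      by simp
    then have "l * least_concave_majorant f t \<le> l * (C * f t)"
      using that(2) by (intro mult_left_mono) auto
    moreover have "f (l * t) \<le> l * least_concave_majorant f t"
      using that by (intro dilate_le_least_concave_majorant[OF assms(1,2)]) auto
    ultimately show ?thesis
      by (simp add: mult.assoc mult.left_commute)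
  qed
  with \<open>C > 0\<close> show ?thesis
    unfolding dilation_bounded_def by blast
qed

lemma least_concave_majorant_le_if_dilation_bound:
  fixes f :: "real \<Rightarrow> real"
  assumes "\<And>s. 0 \<le> s \<Longrightarrow> 0 \<le> f s" "mono_on {0..} f" "0 < t" "0 \<le> C"
    and dil: "\<And>s. t \<le> s \<Longrightarrow> f s \<le> C * (s / t) * f t"
  shows "least_concave_majorant f t \<le> (1 + C) * f t"
proof -
  define g where "g = (\<lambda>s. f t + C * f t / t * s)"
  have "concave_on {0..} g"
    unfolding g_def by (rule concave_on_affine)
  have "f s \<le> g s" if "0 \<le> s" for s
  proof (cases "s \<le> t")
    case True
    moreover have "0 \<le> C * f t / t * s"
      using assms(1,3,4) that by simp
    ultimately show ?thesis
      using that mono_onD[OF assms(2), of s t] by (simp add: g_def)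
  next
    case False
    then have "f s \<le> C * f t / t * s"
      using dil[of s] by (simp add: mult.commute mult.left_commute)
    with assms(1)[of t] assms(3) show ?thesis
      by (simp add: g_def)
  qed
  then have "least_concave_majorant f t \<le> g t"
    using assms(3) \<open>concave_on {0..} g\<close> by (intro least_concave_majorant_le) auto
  with assms(3) show ?thesis
    by (simp add: g_def algebra_simps)
qed

lemma equivalent_least_concave_majorant_if_dilation_bounded:
  fixes f :: "real \<Rightarrow> real"
  assumes "\<And>s. 0 \<le> s \<Longrightarrow> 0 \<le> f s" "mono_on {0..} f" "\<And>s. 0 \<le> s \<Longrightarrow> f s \<le> a + b * s"
    and "dilation_bounded f"
  shows "equivalent_weights f (least_concave_majorant f)"
proof -
  obtain C t\<^sub>0 where "C > 0" and dil: "\<And>t l. t \<ge> t\<^sub>0 \<Longrightarrow> l \<ge> 1 \<Longrightarrow> f (l * t) \<le> C * l * f t"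
    using assms(4) unfolding dilation_bounded_def by blast
  have upper: "least_concave_majorant f t \<le> (1 + C) * f t" if "t \<ge> max t\<^sub>0 1" for t
  proof (rule least_concave_majorant_le_if_dilation_bound[OF assms(1,2)])
    fix s assume "t \<le> s"
    with that dil[of t "s / t"] show "f s \<le> C * (s / t) * f t"
      by simp
  qed (use that \<open>C > 0\<close> in auto)
  have lower: "0 \<le> f t \<and> f t \<le> least_concave_majorant f t" if "0 \<le> t" for t
    using assms(1)[OF that] le_least_concave_majorant[of f a b t] assms(3) that by blast
  have "\<forall>\<^sub>F t in at_top. norm (least_concave_majorant f t) \<le> (1 + C) * norm (f t)"
    unfolding eventually_at_top_linorder
  proof (intro exI[of _ "max t\<^sub>0 1"] allI impI)
    fix t assume "max t\<^sub>0 1 \<le> t"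
    with upper[of t] lower[of t] show "norm (least_concave_majorant f t) \<le> (1 + C) * norm (f t)"
      by simp
  qed
  then have "least_concave_majorant f \<in> O[at_top](f)"
    by (rule landau_o.bigI[rotated]) (use \<open>C > 0\<close> in simp)
  moreover have "\<forall>\<^sub>F t in at_top. norm (f t) \<le> 1 * norm (least_concave_majorant f t)"
    unfolding eventually_at_top_linorder using lower by (intro exI[of _ 0]) force
  then have "f \<in> O[at_top](least_concave_majorant f)"
    by (rule landau_o.bigI[rotated]) simp
  ultimately show ?thesis
    unfolding equivalent_weights_def by blast
qed

lemma equivalent_least_concave_majorant_iff_dilation_bounded:
  fixes f :: "real \<Rightarrow> real"
  assumes "\<And>s. 0 \<le> s \<Longrightarrow> 0 \<le> f s" "mono_on {0..} f" "\<And>s. 0 \<le> s \<Longrightarrow> f s \<le> a + b * s"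
  shows "equivalent_weights f (least_concave_majorant f) \<longleftrightarrow> dilation_bounded f"
  using dilation_bounded_if_equivalent_least_concave_majorant[OF assms(1,3)]
    equivalent_least_concave_majorant_if_dilation_bounded[OF assms] by blast

locale normalized_weight_function =
  fixes \<omega> :: "real \<Rightarrow> real"
  assumes weight_function: "weight_function \<omega>" and normalized: "normalized_weight \<omega>"
begin

abbreviation \<phi> :: "real \<Rightarrow> real" where "\<phi> \<equiv> wphi \<omega>"
abbreviation \<psi> :: "real \<Rightarrow> real" where "\<psi> \<equiv> wphi_star \<omega>"

lemma weight_nonneg: "0 \<le> t \<Longrightarrow> 0 \<le> \<omega> t"
  using weight_function unfolding weight_function_def by auto

lemma weight_mono: "mono_on {0..} \<omega>"
  using weight_function unfolding weight_function_def by auto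

lemma weight_affine_majorant: "\<exists>a b. \<forall>t\<ge>0. \<omega> t \<le> a + b * t"
proof -
  obtain c where "\<forall>\<^sub>F t in at_top. norm (\<omega> t) \<le> c * norm t"
    using weight_function unfolding weight_function_def by (auto elim: landau_o.bigE)
  then obtain N where N: "\<And>t. t \<ge> N \<Longrightarrow> norm (\<omega> t) \<le> c * norm t"
    by (auto simp: eventually_at_top_linorder)
  have "\<omega> t \<le> \<omega> (max N 0) + \<bar>c\<bar> * t" if "0 \<le> t" for t
  proof (cases "t \<ge> max N 0")
    case True
    then have "\<omega> t \<le> \<bar>c\<bar> * t"
      using N[of t] that by (smt (verit) abs_ge_self mult_right_mono real_norm_def)
    with weight_nonneg[of "max N 0"] show ?thesis
      by linarith
  next
    case False
    with that mono_onD[OF weight_mono, of t "max N 0"] show ?thesis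
      by (smt (verit) abs_ge_zero atLeast_iff mult_nonneg_nonneg)
  qed
  then show ?thesis
    by blast
qed

lemma wphi_nonneg: "0 \<le> \<phi> s"
  unfolding wphi_def by (rule weight_nonneg) simp

lemma wphi_eq_0: "s \<le> 0 \<Longrightarrow> \<phi> s = 0"
  using normalized unfolding wphi_def normalized_weight_def by auto

lemma convex_wphi: "convex_on UNIV \<phi>"
  using weight_function unfolding weight_function_def wphi_def by auto

lemma wphi_superlinear: "\<exists>S. \<forall>s\<ge>S. a * s \<le> \<phi> s"
proof (cases "a \<le> 0")
  case True
  then show ?thesis
    using wphi_nonneg by (intro exI[of _ 0]) (smt (verit) mult_nonpos_nonneg)
next
  case False
  have "(\<lambda>t. ln t) \<in> o[at_top](\<omega>)"
    using weight_function unfolding weight_function_def by auto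
  from landau_o.smallD[OF this, of "1 / a"] False
  obtain N where N: "\<And>t. t \<ge> N \<Longrightarrow> \<bar>ln t\<bar> \<le> 1 / a * \<bar>\<omega> t\<bar>"
    by (auto simp: eventually_at_top_linorder)
  have "a * s \<le> \<phi> s" if "s \<ge> ln (max N 1)" for s
  proof -
    have "max N 1 = exp (ln (max N 1))"
      by simp
    also have "\<dots> \<le> exp s"
      using that by (simp only: exp_le_cancel_iff)
    finally have "max N 1 \<le> exp s" .
    with N[of "exp s"] weight_nonneg[of "exp s"] have "s \<le> \<omega> (exp s) / a"
      by simp
    with False show ?thesis
      unfolding wphi_def by (simp add: field_simps)
  qed
  then show ?thesis
    by blast
qed

lemma bdd_above_young: "bdd_above ((\<lambda>s. s * t - \<phi> s) ` {0..})"
proof -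
  obtain S where S: "\<And>s. s \<ge> S \<Longrightarrow> \<bar>t\<bar> * s \<le> \<phi> s"
    using wphi_superlinear[of "\<bar>t\<bar>"] by blast
  have "s * \<bar>t\<bar> - \<phi> s \<le> \<bar>S\<bar> * \<bar>t\<bar>" if "s \<ge> 0" for s
  proof (cases "s \<ge> S")
    case True
    with S[of s] show ?thesis
      by (simp add: mult.commute) (smt (verit) abs_ge_zero mult_nonneg_nonneg)
  next
    case False
    with that have "s * \<bar>t\<bar> \<le> \<bar>S\<bar> * \<bar>t\<bar>"
      by (intro mult_right_mono) auto
    with wphi_nonneg[of s] show ?thesis
      by linarith
  qed
  moreover have "s * t \<le> s * \<bar>t\<bar>" if "s \<ge> 0" for s
    using that by (intro mult_left_mono) auto
  ultimately have "s * t - \<phi> s \<le> \<bar>S\<bar> * \<bar>t\<bar>" if "s \<ge> 0" for s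
    using that by fastforce
  then show ?thesis
    by (auto intro!: bdd_aboveI)
qed

lemma young_le_wphi_star: "0 \<le> s \<Longrightarrow> s * t - \<phi> s \<le> \<psi> t"
  unfolding wphi_star_def by (rule cSUP_upper[OF _ bdd_above_young]) auto

lemma wphi_star_le: "(\<And>s. 0 \<le> s \<Longrightarrow> s * t - \<phi> s \<le> B) \<Longrightarrow> \<psi> t \<le> B"
  unfolding wphi_star_def by (rule cSUP_least) auto

lemma wphi_star_nonneg: "0 \<le> \<psi> t"
  using young_le_wphi_star[of 0 t] wphi_eq_0[of 0] by simp

lemma wphi_star_0: "\<psi> 0 = 0"
  using wphi_star_le[of 0 0] wphi_star_nonneg[of 0] wphi_nonneg by force

lemma convex_wphi_star: "convex_on UNIV \<psi>"
proof (rule convex_onI)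
  fix a b \<mu> :: real assume \<mu>: "0 < \<mu>" "\<mu> < 1"
  show "\<psi> ((1 - \<mu>) *\<^sub>R a + \<mu> *\<^sub>R b) \<le> (1 - \<mu>) * \<psi> a + \<mu> * \<psi> b"
  proof (rule wphi_star_le)
    fix s :: real assume "0 \<le> s"
    have "s * ((1 - \<mu>) *\<^sub>R a + \<mu> *\<^sub>R b) - \<phi> s = (1 - \<mu>) * (s * a - \<phi> s) + \<mu> * (s * b - \<phi> s)"
      by (simp add: algebra_simps)
    also have "\<dots> \<le> (1 - \<mu>) * \<psi> a + \<mu> * \<psi> b"
      using \<mu> young_le_wphi_star[OF \<open>0 \<le> s\<close>] by (intro add_mono mult_left_mono) auto
    finally show "s * ((1 - \<mu>) *\<^sub>R a + \<mu> *\<^sub>R b) - \<phi> s \<le> (1 - \<mu>) * \<psi> a + \<mu> * \<psi> b" .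
  qed
qed simp

lemma wphi_star_div_mono:
  assumes "0 < t" "t \<le> t'"
  shows "\<psi> t / t \<le> \<psi> t' / t'"
proof -
  have "\<psi> ((1 - t / t') *\<^sub>R 0 + (t / t') *\<^sub>R t') \<le> (1 - t / t') * \<psi> 0 + (t / t') * \<psi> t'"
    using assms by (intro convex_onD[OF convex_wphi_star]) auto
  with assms show ?thesis
    by (simp add: wphi_star_0 field_simps)
qed

lemma wphi_star_superlinear: "\<exists>T>0. \<forall>t\<ge>T. a * t < \<psi> t"
proof -
  define s where "s = max a 0 + 1"
  have "a * t < \<psi> t" if "t \<ge> \<phi> s + 1" for t
  proof -
    have "0 < t"
      using that wphi_nonneg[of s] by linarith
    moreover have "1 * t \<le> (s - a) * t"
      using \<open>0 < t\<close> by (intro mult_right_mono) (auto simp: s_def)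
    ultimately have "a * t < s * t - \<phi> s"
      using that by (simp add: algebra_simps)
    also have "\<dots> \<le> \<psi> t"
      by (rule young_le_wphi_star) (simp add: s_def)
    finally show ?thesis .
  qed
  moreover have "0 < \<phi> s + 1"
    using wphi_nonneg[of s] by linarith
  ultimately show ?thesis
    by blast
qed

lemma wphi_eq_subgradient:
  assumes "0 \<le> R" "\<forall>s. \<phi> R + g * (s - R) \<le> \<phi> s"
  shows "\<phi> R = R * g - \<psi> g"
proof -
  have "\<psi> g \<le> R * g - \<phi> R"
    using assms(2) by (intro wphi_star_le) (simp add: algebra_simps)
  with young_le_wphi_star[OF assms(1), of g] show ?thesis
    by simp
qed

definition log_vartheta :: "real \<Rightarrow> nat \<Rightarrow> real" where
  "log_vartheta x k = (\<psi> (x * real k) - \<psi> (x * (real k - 1))) / x"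

lemma vartheta_eq_exp: "1 \<le> k \<Longrightarrow> vartheta \<omega> x k = exp (log_vartheta x k)"
  unfolding vartheta_def W_def log_vartheta_def
  by (simp add: exp_diff[symmetric] diff_divide_distrib of_nat_diff)

lemma W_root_eq_exp: "1 \<le> k \<Longrightarrow> 0 < y \<Longrightarrow> W \<omega> y k powr (1 / real k) = exp (\<psi> (y * real k) / (y * real k))"
  unfolding W_def by (simp add: exp_powr_real)

lemma vartheta_div_eq_exp: "1 \<le> k \<Longrightarrow> vartheta \<omega> x k / real k = exp (log_vartheta x k - ln (real k))"
  by (simp add: vartheta_eq_exp exp_diff)

lemma vartheta_le_W_root_iff:
  assumes "0 < y" "0 < A" "1 \<le> k"
  shows "vartheta \<omega> x k \<le> A * W \<omega> y k powr (1 / real k)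
    \<longleftrightarrow> log_vartheta x k \<le> ln A + \<psi> (y * real k) / (y * real k)"
proof -
  have "A * exp (\<psi> (y * real k) / (y * real k)) = exp (ln A + \<psi> (y * real k) / (y * real k))"
    using assms by (simp add: exp_add)
  then show ?thesis
    using assms by (simp only: vartheta_eq_exp W_root_eq_exp exp_le_cancel_iff)
qed

lemma good_weight_iff_log_vartheta:
  "good_weight \<omega> \<longleftrightarrow> (\<forall>x>0. \<exists>y>0. \<exists>c. \<forall>j k. 1 \<le> j \<longrightarrow> j \<le> k \<longrightarrow>
     log_vartheta x j - ln (real j) \<le> c + log_vartheta y k - ln (real k))"
proof -
  have iff: "vartheta \<omega> x j / real j \<le> exp c * vartheta \<omega> y k / real k \<longleftrightarrow>
      log_vartheta x j - ln (real j) \<le> c + log_vartheta y k - ln (real k)"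
    if "1 \<le> j" "j \<le> k" for x y c j k
  proof -
    have "exp c * vartheta \<omega> y k / real k = exp (c + log_vartheta y k - ln (real k))"
      using that by (simp add: vartheta_eq_exp exp_add exp_diff)
    with that show ?thesis
      by (simp add: vartheta_div_eq_exp)
  qed
  have "(\<exists>C\<ge>1. \<forall>j k. 1 \<le> j \<and> j \<le> k \<longrightarrow> vartheta \<omega> x j / real j \<le> C * vartheta \<omega> y k / real k)
      \<longleftrightarrow> (\<exists>c. \<forall>j k. 1 \<le> j \<longrightarrow> j \<le> k \<longrightarrow>
            log_vartheta x j - ln (real j) \<le> c + log_vartheta y k - ln (real k))" for x y
  proof
    assume "\<exists>C\<ge>1. \<forall>j k. 1 \<le> j \<and> j \<le> k \<longrightarrow> vartheta \<omega> x j / real j \<le> C * vartheta \<omega> y k / real k"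
    then obtain C where "C \<ge> 1"
      and C: "\<And>j k. 1 \<le> j \<Longrightarrow> j \<le> k \<Longrightarrow> vartheta \<omega> x j / real j \<le> exp (ln C) * vartheta \<omega> y k / real k"
      by auto
    show "\<exists>c. \<forall>j k. 1 \<le> j \<longrightarrow> j \<le> k \<longrightarrow>
        log_vartheta x j - ln (real j) \<le> c + log_vartheta y k - ln (real k)"
      using iff C by blast
  next
    assume "\<exists>c. \<forall>j k. 1 \<le> j \<longrightarrow> j \<le> k \<longrightarrow>
        log_vartheta x j - ln (real j) \<le> c + log_vartheta y k - ln (real k)"
    then obtain c where c: "\<And>j k. 1 \<le> j \<Longrightarrow> j \<le> k \<Longrightarrow>
        log_vartheta x j - ln (real j) \<le> max c 0 + log_vartheta y k - ln (real k)"
      by (smt (verit))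
    have "vartheta \<omega> x j / real j \<le> exp (max c 0) * vartheta \<omega> y k / real k" if "1 \<le> j" "j \<le> k" for j k
      using iff[OF that] c[OF that] by blast
    then show "\<exists>C\<ge>1. \<forall>j k. 1 \<le> j \<and> j \<le> k \<longrightarrow> vartheta \<omega> x j / real j \<le> C * vartheta \<omega> y k / real k"
      by (intro exI[of _ "exp (max c 0)"]) auto
  qed
  then show ?thesis
    unfolding good_weight_def by presburger
qed

lemma incseq_log_vartheta:
  assumes "0 < x"
  shows "incseq (log_vartheta x)"
proof (rule incseq_SucI)
  fix k
  have "\<psi> ((1 - 1 / 2) *\<^sub>R (x * (real k - 1)) + (1 / 2) *\<^sub>R (x * (real k + 1)))
      \<le> (1 - 1 / 2) * \<psi> (x * (real k - 1)) + 1 / 2 * \<psi> (x * (real k + 1))"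
    by (rule convex_onD[OF convex_wphi_star]) auto
  moreover have "(1 - 1 / 2) *\<^sub>R (x * (real k - 1)) + (1 / 2) *\<^sub>R (x * (real k + 1)) = x * real k"
    by (simp add: algebra_simps)
  ultimately show "log_vartheta x k \<le> log_vartheta x (Suc k)"
    using assms unfolding log_vartheta_def by (simp add: divide_right_mono algebra_simps)
qed

lemma wphi_star_div_le_log_vartheta:
  assumes "0 < x" "1 \<le> k"
  shows "\<psi> (x * real k) / (x * real k) \<le> log_vartheta x k"
proof -
  have "\<psi> ((1 - 1 / real k) *\<^sub>R (x * real k) + (1 / real k) *\<^sub>R 0)
      \<le> (1 - 1 / real k) * \<psi> (x * real k) + 1 / real k * \<psi> 0"
    using assms by (intro convex_onD[OF convex_wphi_star]) auto
  then have "\<psi> (x * (real k - 1)) \<le> \<psi> (x * real k) - \<psi> (x * real k) / real k"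
    using assms by (simp add: wphi_star_0 algebra_simps)
  then have "\<psi> (x * real k) / real k / x \<le> (\<psi> (x * real k) - \<psi> (x * (real k - 1))) / x"
    using assms by (intro divide_right_mono) auto
  then show ?thesis
    unfolding log_vartheta_def by (simp add: mult.commute)
qed

lemma sum_log_vartheta: "0 < x \<Longrightarrow> (\<Sum>i<n. log_vartheta x (Suc i)) = \<psi> (x * real n) / x"
  by (induction n) (simp_all add: log_vartheta_def wphi_star_0 diff_divide_distrib algebra_simps)

definition wphi_star_log_growth :: "real \<Rightarrow> real \<Rightarrow> bool" where
  "wphi_star_log_growth c T \<longleftrightarrow> (\<forall>t\<ge>T. \<forall>l\<ge>1. \<psi> t / t + ln l - c \<le> \<psi> (l * t) / (l * t))"

lemma wphi_star_log_growth_mono: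
  "wphi_star_log_growth c T \<Longrightarrow> c \<le> c' \<Longrightarrow> wphi_star_log_growth c' T"
  unfolding wphi_star_log_growth_def by (smt (verit))

lemma wphi_star_div_ge_ln:
  assumes "0 < T" "wphi_star_log_growth c T"
  shows "\<exists>c'. \<forall>g>0. ln g - c' \<le> \<psi> g / g"
proof -
  define c' where "c' = max (c + ln T - \<psi> T / T) (ln T)"
  have "ln g - c' \<le> \<psi> g / g" if "0 < g" for g
  proof (cases "T \<le> g")
    case True
    then have "1 \<le> g / T"
      using assms(1) by simp
    then have "\<psi> T / T + ln (g / T) - c \<le> \<psi> (g / T * T) / (g / T * T)"
      using assms(2) unfolding wphi_star_log_growth_def by blast
    with True assms(1) show ?thesis
      by (simp add: c'_def ln_div)
  next
    case False
    with that have "ln g \<le> ln T"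
      by simp
    moreover have "0 \<le> \<psi> g / g"
      using that wphi_star_nonneg[of g] by simp
    ultimately show ?thesis
      unfolding c'_def by linarith
  qed
  then show ?thesis
    by blast
qed

lemma wphi_star_div_shift:
  assumes "0 < t" "0 \<le> u" "0 < l" "\<And>s. r \<le> s \<Longrightarrow> \<phi> (s + u) \<le> l * \<phi> s" "r * t < \<psi> t"
  shows "\<psi> t / t + u \<le> \<psi> (l * t) / (l * t)"
proof -
  have "\<psi> t \<le> max (r * t) (\<psi> (l * t) / l - u * t)"
  proof (rule wphi_star_le)
    fix s :: real assume "0 \<le> s"
    show "s * t - \<phi> s \<le> max (r * t) (\<psi> (l * t) / l - u * t)"
    proof (cases "s < r")
      case True
      with assms(1) wphi_nonneg[of s] show ?thesis
        by (smt (verit) mult_strict_right_mono)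
    next
      case False
      have "(s + u) * (l * t) - \<phi> (s + u) \<le> \<psi> (l * t)"
        using \<open>0 \<le> s\<close> assms(2) by (intro young_le_wphi_star) simp
      with assms(4)[of s] False have "l * (s * t - \<phi> s) \<le> \<psi> (l * t) - l * (u * t)"
        by (simp add: algebra_simps)
      with assms(3) have "s * t - \<phi> s \<le> \<psi> (l * t) / l - u * t"
        by (simp add: field_simps)
      then show ?thesis
        by linarith
    qed
  qed
  with assms(5) have "\<psi> t + u * t \<le> \<psi> (l * t) / l"
    by linarith
  then have "(\<psi> t + u * t) / t \<le> \<psi> (l * t) / l / t"
    using assms(1) by (intro divide_right_mono) auto
  with assms(1) show ?thesis
    by (simp add: add_divide_distrib)
qed

lemma wphi_shift_bounded_if_dilation_bounded:
  assumes "dilation_bounded \<omega>"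
  shows "\<exists>C\<ge>1. \<exists>r. \<forall>s\<ge>r. \<forall>u\<ge>0. \<phi> (s + u) \<le> C * exp u * \<phi> s"
proof -
  obtain C t\<^sub>0 where dil: "\<And>t l. t \<ge> t\<^sub>0 \<Longrightarrow> l \<ge> 1 \<Longrightarrow> \<omega> (l * t) \<le> C * l * \<omega> t"
    using assms unfolding dilation_bounded_def by blast
  have "\<phi> (s + u) \<le> max C 1 * exp u * \<phi> s" if "ln (max t\<^sub>0 1) \<le> s" "0 \<le> u" for s u
  proof -
    have "max t\<^sub>0 1 = exp (ln (max t\<^sub>0 1))"
      by simp
    also have "\<dots> \<le> exp s"
      using that(1) by (simp only: exp_le_cancel_iff)
    finally have "\<omega> (exp u * exp s) \<le> C * exp u * \<omega> (exp s)"
      using that(2) by (intro dil) auto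
    also have "\<dots> \<le> max C 1 * exp u * \<omega> (exp s)"
      by (intro mult_right_mono weight_nonneg) auto
    finally show ?thesis
      unfolding wphi_def by (simp add: exp_add mult.commute)
  qed
  then show ?thesis
    by (intro exI[of _ "max C 1"] exI[of _ "ln (max t\<^sub>0 1)"]) auto
qed

lemma log_growth_if_dilation_bounded:
  assumes "dilation_bounded \<omega>"
  shows "\<exists>c T. 0 < T \<and> wphi_star_log_growth c T"
proof -
  obtain C' r where "1 \<le> C'" and shift: "\<And>s u. r \<le> s \<Longrightarrow> 0 \<le> u \<Longrightarrow> \<phi> (s + u) \<le> C' * exp u * \<phi> s"
    using wphi_shift_bounded_if_dilation_bounded[OF assms] by blast
  obtain T where "0 < T" and T: "\<And>t. T \<le> t \<Longrightarrow> r * t < \<psi> t"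
    using wphi_star_superlinear by blast
  have "wphi_star_log_growth (ln C') T"
    unfolding wphi_star_log_growth_def
  proof (intro allI impI)
    fix t l :: real assume "T \<le> t" "1 \<le> l"
    show "\<psi> t / t + ln l - ln C' \<le> \<psi> (l * t) / (l * t)"
    proof (cases "C' \<le> l")
      case True
      define u where "u = ln (l / C')"
      have "0 \<le> u" "C' * exp u = l"
        using True \<open>1 \<le> C'\<close> by (auto simp: u_def)
      then have "\<psi> t / t + u \<le> \<psi> (l * t) / (l * t)"
        using \<open>0 < T\<close> \<open>T \<le> t\<close> \<open>1 \<le> C'\<close> shift T[OF \<open>T \<le> t\<close>]
        by (intro wphi_star_div_shift[of t u l r]) auto
      then show ?thesis
        using True \<open>1 \<le> C'\<close> by (simp add: u_def ln_div)
    next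
      case False
      then have "ln l \<le> ln C'"
        using \<open>1 \<le> l\<close> by simp
      moreover have "\<psi> t / t \<le> \<psi> (l * t) / (l * t)"
        using \<open>0 < T\<close> \<open>T \<le> t\<close> \<open>1 \<le> l\<close> by (intro wphi_star_div_mono) auto
      ultimately show ?thesis
        by linarith
    qed
  qed
  with \<open>0 < T\<close> show ?thesis
    by blast
qed

lemma wphi_le_if_steep_subgradient:
  assumes "wphi_star_log_growth c T" "0 < T" "0 \<le> c" "0 \<le> r" "0 \<le> u"
    and "\<forall>s. \<phi> (r + u) + g * (s - (r + u)) \<le> \<phi> s" "T * exp c * exp u \<le> g"
  shows "\<phi> (r + u) \<le> exp c * exp u * \<phi> r"
proof -
  define l where "l = exp (u + c)"
  define t where "t = g / l"
  have "1 \<le> l" "0 < l"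
    using assms(3,5) by (auto simp: l_def)
  have "T \<le> t" "l * t = g"
    using assms(7) \<open>0 < l\<close> by (auto simp: t_def l_def exp_add field_simps)
  have "0 < t"
    using \<open>T \<le> t\<close> assms(2) by linarith
  have "\<phi> (r + u) = (r + u) * (l * t) - \<psi> (l * t)"
    using wphi_eq_subgradient[OF _ assms(6)] assms(4,5) \<open>l * t = g\<close> by simp
  then have "\<phi> (r + u) / l = t * ((r + u) - \<psi> g / g)"
    using \<open>0 < t\<close> \<open>0 < l\<close> unfolding \<open>l * t = g\<close>[symmetric]
    by (simp add: diff_divide_distrib right_diff_distrib)
  also have "\<dots> \<le> t * (r - \<psi> t / t)"
  proof -
    have "\<psi> t / t + ln l - c \<le> \<psi> g / g"
      using assms(1) \<open>T \<le> t\<close> \<open>1 \<le> l\<close> \<open>l * t = g\<close> unfolding wphi_star_log_growth_def by blast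
    with \<open>0 < t\<close> show ?thesis
      by (intro mult_left_mono) (auto simp: l_def)
  qed
  also have "\<dots> \<le> \<phi> r"
    using young_le_wphi_star[OF assms(4), of t] \<open>0 < t\<close> by (simp add: algebra_simps)
  finally show ?thesis
    using \<open>0 < l\<close> by (simp add: l_def exp_add divide_le_eq mult.commute)
qed

lemma wphi_le_if_flat_subgradient:
  assumes "\<And>g. 0 < g \<Longrightarrow> ln g - c \<le> \<psi> g / g" "0 < M" "0 \<le> r" "0 \<le> u"
    and "\<forall>s. \<phi> (r + u) + g * (s - (r + u)) \<le> \<phi> s" "0 < g" "g \<le> M * exp u"
  shows "\<phi> (r + u) \<le> M * exp u * (\<bar>r - ln M + c\<bar> + 1)"
proof -
  define \<theta> where "\<theta> = g / (M * exp u)"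
  have "0 < \<theta>" "\<theta> \<le> 1" "g = M * exp u * \<theta>"
    using assms(2,6,7) by (auto simp: \<theta>_def)
  have "\<phi> (r + u) = (r + u) * g - \<psi> g"
    using wphi_eq_subgradient[OF _ assms(5)] assms(3,4) by simp
  also have "\<dots> \<le> g * (r + u - ln g + c)"
    using assms(1)[OF assms(6)] assms(6) by (simp add: le_divide_eq algebra_simps)
  also have "ln g = ln M + u + ln \<theta>"
    using \<open>0 < \<theta>\<close> assms(2) \<open>g = M * exp u * \<theta>\<close> by (simp add: ln_mult)
  also have "g * (r + u - (ln M + u + ln \<theta>) + c) = M * exp u * (\<theta> * (r - ln M + c) - \<theta> * ln \<theta>)"
    by (subst \<open>g = M * exp u * \<theta>\<close>) (simp add: algebra_simps)
  also have "\<dots> \<le> M * exp u * (\<bar>r - ln M + c\<bar> + 1)"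
  proof -
    have "\<theta> * (r - ln M + c) \<le> \<theta> * \<bar>r - ln M + c\<bar>"
      using \<open>0 < \<theta>\<close> by (intro mult_left_mono) auto
    also have "\<dots> \<le> \<bar>r - ln M + c\<bar>"
      using \<open>0 < \<theta>\<close> \<open>\<theta> \<le> 1\<close> by (simp add: mult_left_le_one_le)
    finally have "\<theta> * (r - ln M + c) \<le> \<bar>r - ln M + c\<bar>" .
    moreover have "- (\<theta> * ln \<theta>) \<le> 1"
      using neg_mult_ln_le[OF \<open>0 < \<theta>\<close>] \<open>0 < \<theta>\<close> by linarith
    ultimately show ?thesis
      using assms(2) by (intro mult_left_mono) auto
  qed
  finally show ?thesis .
qed

text \<open>
  For a subgradient g of phi at r + u we have phi(r + u) = (r + u) g - psi(g). Steep slopes are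
  controlled by the growth of psi(t)/t, flat ones by psi(g) >= g (ln g - c').
\<close>

lemma wphi_shift_le_if_log_growth:
  assumes "wphi_star_log_growth c T" "0 < T" "0 \<le> c"
    and c': "\<And>g. 0 < g \<Longrightarrow> ln g - c' \<le> \<psi> g / g"
    and "1 \<le> r" "r \<le> \<phi> r" "\<bar>c' - ln (T * exp c)\<bar> \<le> r" "0 \<le> u"
  shows "\<phi> (r + u) \<le> max (exp c) (3 * (T * exp c)) * exp u * \<phi> r"
proof -
  define M where "M = T * exp c"
  define K where "K = max (exp c) (3 * M)"
  have "0 < M" "0 < K"
    using assms(2) by (simp_all add: M_def K_def less_max_iff_disj)
  obtain g where g: "\<forall>s. \<phi> (r + u) + g * (s - (r + u)) \<le> \<phi> s"
    using convex_on_UNIV_subgradient[OF convex_wphi] by blast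
  consider "g \<le> 0" | "0 < g" "g \<le> M * exp u" | "M * exp u \<le> g"
    by linarith
  then have "\<phi> (r + u) \<le> K * exp u * \<phi> r"
  proof cases
    case 1
    with assms(5,8) have "(r + u) * g \<le> 0"
      by (simp add: mult_nonneg_nonpos)
    then have "\<phi> (r + u) \<le> 0"
      using wphi_eq_subgradient[OF _ g] wphi_star_nonneg[of g] assms(5,8) by simp
    moreover have "0 \<le> K * exp u * \<phi> r"
      using \<open>0 < K\<close> wphi_nonneg[of r] by simp
    ultimately show ?thesis
      by linarith
  next
    case 2
    then have "\<phi> (r + u) \<le> M * exp u * (\<bar>r - ln M + c'\<bar> + 1)"
      using assms(5,8) \<open>0 < M\<close> by (intro wphi_le_if_flat_subgradient[OF c' _ _ _ g]) auto
    also have "\<dots> \<le> M * exp u * (3 * \<phi> r)"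
      using assms(5-7) \<open>0 < M\<close> by (intro mult_left_mono) (auto simp: M_def)
    also have "\<dots> = (3 * M) * (exp u * \<phi> r)"
      by simp
    also have "\<dots> \<le> K * (exp u * \<phi> r)"
      using wphi_nonneg[of r] by (intro mult_right_mono) (auto simp: K_def)
    finally show ?thesis
      by (simp add: mult.assoc)
  next
    case 3
    then have "\<phi> (r + u) \<le> exp c * exp u * \<phi> r"
      using assms(2,3,5,8) by (intro wphi_le_if_steep_subgradient[OF assms(1) _ _ _ _ g]) (auto simp: M_def)
    also have "\<dots> \<le> K * exp u * \<phi> r"
      using wphi_nonneg[of r] by (intro mult_right_mono) (auto simp: K_def)
    finally show ?thesis .
  qed
  then show ?thesis
    by (simp add: K_def M_def)
qed

lemma wphi_shift_bounded_if_log_growth: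
  assumes "0 < T" "wphi_star_log_growth c T"
  shows "\<exists>K>0. \<exists>r\<^sub>0. \<forall>r\<ge>r\<^sub>0. \<forall>u\<ge>0. \<phi> (r + u) \<le> K * exp u * \<phi> r"
proof -
  define c\<^sub>0 where "c\<^sub>0 = max c 0"
  have growth: "wphi_star_log_growth c\<^sub>0 T"
    using assms(2) by (rule wphi_star_log_growth_mono) (simp add: c\<^sub>0_def)
  obtain c' where c': "\<And>g. 0 < g \<Longrightarrow> ln g - c' \<le> \<psi> g / g"
    using wphi_star_div_ge_ln[OF assms] by blast
  obtain S where S: "\<And>s. S \<le> s \<Longrightarrow> 1 * s \<le> \<phi> s"
    using wphi_superlinear by blast
  define r\<^sub>0 where "r\<^sub>0 = max (max S 1) \<bar>c' - ln (T * exp c\<^sub>0)\<bar>"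
  have "\<phi> (r + u) \<le> max (exp c\<^sub>0) (3 * (T * exp c\<^sub>0)) * exp u * \<phi> r" if "r\<^sub>0 \<le> r" "0 \<le> u" for r u
    using that S[of r] assms(1)
    by (intro wphi_shift_le_if_log_growth[OF growth _ _ c']) (auto simp: r\<^sub>0_def c\<^sub>0_def)
  moreover have "0 < max (exp c\<^sub>0) (3 * (T * exp c\<^sub>0))"
    by (simp add: less_max_iff_disj)
  ultimately show ?thesis
    by blast
qed

lemma dilation_bounded_if_log_growth:
  assumes "0 < T" "wphi_star_log_growth c T"
  shows "dilation_bounded \<omega>"
proof -
  obtain K r\<^sub>0 where "0 < K" and shift: "\<And>r u. r\<^sub>0 \<le> r \<Longrightarrow> 0 \<le> u \<Longrightarrow> \<phi> (r + u) \<le> K * exp u * \<phi> r"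
    using wphi_shift_bounded_if_log_growth[OF assms] by blast
  have "\<omega> (l * t) \<le> K * l * \<omega> t" if "exp r\<^sub>0 \<le> t" "1 \<le> l" for t l
  proof -
    have "0 < t"
      using that(1) exp_gt_zero[of r\<^sub>0] by linarith
    then have "r\<^sub>0 \<le> ln t"
      using that(1) by (metis exp_le_cancel_iff exp_ln)
    with shift[of "ln t" "ln l"] that(2) \<open>0 < t\<close> show ?thesis
      by (simp add: wphi_def exp_add mult.commute)
  qed
  with \<open>0 < K\<close> show ?thesis
    unfolding dilation_bounded_def by blast
qed

lemma log_vartheta_dominated_if_log_growth:
  assumes "0 < T" "wphi_star_log_growth c T" "0 < x" "0 < y"
    and HA: "\<And>k. 1 \<le> k \<Longrightarrow> log_vartheta x k \<le> a + \<psi> (y * real k) / (y * real k)"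
  shows "\<exists>C. \<forall>j k. 1 \<le> j \<longrightarrow> j \<le> k \<longrightarrow>
    log_vartheta x j - ln (real j) \<le> C + log_vartheta y k - ln (real k)"
proof -
  obtain c' where c': "\<And>g. 0 < g \<Longrightarrow> ln g - c' \<le> \<psi> g / g"
    using wphi_star_div_ge_ln[OF assms(1,2)] by blast
  define J where "J = nat \<lceil>T / y\<rceil>"
  have "log_vartheta x j - ln (real j)
      \<le> max (a + c) (log_vartheta x J + c' - ln y) + log_vartheta y k - ln (real k)"
    if "1 \<le> j" "j \<le> k" for j k
  proof -
    have lower: "\<psi> (y * real k) / (y * real k) \<le> log_vartheta y k"
      using assms(4) that by (intro wphi_star_div_le_log_vartheta) auto
    show ?thesis
    proof (cases "T \<le> y * real j")
      case True
      have "1 \<le> real k / real j"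
        using that by simp
      with True assms(2) have "\<psi> (y * real j) / (y * real j) + ln (real k / real j) - c
          \<le> \<psi> (real k / real j * (y * real j)) / (real k / real j * (y * real j))"
        unfolding wphi_star_log_growth_def by blast
      with that have "\<psi> (y * real j) / (y * real j) + ln (real k) - ln (real j) - c
          \<le> \<psi> (y * real k) / (y * real k)"
        by (simp add: ln_div mult.commute)
      with HA[OF that(1)] lower show ?thesis
        by linarith
    next
      case False
      then have "real j < T / y"
        using assms(4) by (simp add: pos_less_divide_eq mult.commute)
      then have "j \<le> J"
        unfolding J_def by linarith
      then have "log_vartheta x j \<le> log_vartheta x J"
        using incseq_log_vartheta[OF assms(3)] by (simp add: incseqD)
      moreover have "ln (y * real k) - c' \<le> \<psi> (y * real k) / (y * real k)"
        using assms(4) that by (intro c') simp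
      moreover have "ln (y * real k) = ln y + ln (real k)" "0 \<le> ln (real j)"
        using assms(4) that by (simp_all add: ln_mult)
      ultimately show ?thesis
        using lower by linarith
    qed
  qed
  then show ?thesis
    by blast
qed

lemma good_weight_if_log_growth:
  assumes "0 < T" "wphi_star_log_growth c T"
    and H: "\<forall>x>0. \<exists>y>0. \<exists>A>0. \<forall>k::nat. k \<ge> 1 \<longrightarrow> vartheta \<omega> x k \<le> A * W \<omega> y k powr (1 / real k)"
  shows "good_weight \<omega>"
  unfolding good_weight_iff_log_vartheta
proof (intro allI impI)
  fix x :: real assume "0 < x"
  then obtain y A where "0 < y" "0 < A"
    and "\<forall>k::nat. k \<ge> 1 \<longrightarrow> vartheta \<omega> x k \<le> A * W \<omega> y k powr (1 / real k)"
    using H by blast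
  then have "log_vartheta x k \<le> ln A + \<psi> (y * real k) / (y * real k)" if "1 \<le> k" for k
    using vartheta_le_W_root_iff[OF \<open>0 < y\<close> \<open>0 < A\<close> that] that by blast
  with \<open>0 < y\<close> show "\<exists>y>0. \<exists>c. \<forall>j k. 1 \<le> j \<longrightarrow> j \<le> k \<longrightarrow>
      log_vartheta x j - ln (real j) \<le> c + log_vartheta y k - ln (real k)"
    using log_vartheta_dominated_if_log_growth[OF assms(1,2) \<open>0 < x\<close> \<open>0 < y\<close>] by blast
qed

text \<open>Since (b + 1)(i + 1) <= b n + i + 1 for i < n, comparing index b + 1 with b n + i + 1
  gains ln (i + 1), and these gains add up to ln n! over a block.\<close>

lemma sum_log_vartheta_block_ge:
  assumes "1 \<le> n"
    and G: "\<And>j m. 1 \<le> j \<Longrightarrow> j \<le> m \<Longrightarrow> log_vartheta 1 j - ln (real j) \<le> c + log_vartheta y m - ln (real m)"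
  shows "real n * log_vartheta 1 (Suc b) + (real n * ln (real n) - real n) - real n * c
    \<le> (\<Sum>i<n. log_vartheta y (Suc (b * n + i)))"
proof -
  have "log_vartheta 1 (Suc b) + ln (real (Suc i)) - c \<le> log_vartheta y (Suc (b * n + i))"
    if "i < n" for i
  proof -
    have "b * Suc i \<le> b * n"
      using that by (intro mult_le_mono2) simp
    then have "Suc b * Suc i \<le> Suc (b * n + i)"
      by simp
    then have "real (Suc b) * real (Suc i) \<le> real (Suc (b * n + i))"
      by (simp only: of_nat_mult[symmetric] of_nat_le_iff)
    then have "ln (real (Suc b) * real (Suc i)) \<le> ln (real (Suc (b * n + i)))"
      by (rule ln_mono) simp
    then have "ln (real (Suc b)) + ln (real (Suc i)) \<le> ln (real (Suc (b * n + i)))"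
      by (simp add: ln_mult del: of_nat_Suc)
    moreover have "Suc b \<le> Suc (b * n + i)"
      using assms(1) by (simp add: trans_le_add1)
    ultimately show ?thesis
      using G[of "Suc b" "Suc (b * n + i)"] by linarith
  qed
  then have "(\<Sum>i<n. log_vartheta 1 (Suc b) + ln (real (Suc i)) - c)
      \<le> (\<Sum>i<n. log_vartheta y (Suc (b * n + i)))"
    by (intro sum_mono) simp
  with sum_ln_Suc_ge[of n] show ?thesis
    by (simp add: sum.distrib sum_subtractf)
qed

lemma wphi_star_lattice_ge:
  assumes "0 < y" "1 \<le> k" "1 \<le> n"
    and G: "\<And>j m. 1 \<le> j \<Longrightarrow> j \<le> m \<Longrightarrow> log_vartheta 1 j - ln (real j) \<le> c + log_vartheta y m - ln (real m)"
  shows "\<psi> (real k) / real k + ln (real n) - (1 + c) \<le> \<psi> (y * real (k * n)) / (y * real (k * n))"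
proof -
  have "\<psi> (y * real (k * n)) / y = (\<Sum>m<k * n. log_vartheta y (Suc m))"
    using sum_log_vartheta[OF assms(1)] by simp
  also have "\<dots> = (\<Sum>b<k. \<Sum>i<n. log_vartheta y (Suc (b * n + i)))"
    by (simp add: sum.nat_group[symmetric] sum.atLeastLessThan_shift_0[where m = "_ * n"]
        atLeast0LessThan comp_def)
  also have "\<dots> \<ge> (\<Sum>b<k. real n * log_vartheta 1 (Suc b) + (real n * ln (real n) - real n) - real n * c)"
    using assms(3) G by (intro sum_mono sum_log_vartheta_block_ge)
  also have "(\<Sum>b<k. real n * log_vartheta 1 (Suc b) + (real n * ln (real n) - real n) - real n * c)
      = real n * \<psi> (real k) + real k * real n * (ln (real n) - (1 + c))"
    using sum_log_vartheta[of 1 k] by (simp add: sum.distrib sum_subtractf flip: sum_distrib_left)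
      (simp add: algebra_simps)
  finally have "(real n * \<psi> (real k) + real k * real n * (ln (real n) - (1 + c))) / (real k * real n)
      \<le> \<psi> (y * real (k * n)) / y / (real k * real n)"
    using assms by (intro divide_right_mono) auto
  moreover have "(real n * \<psi> (real k) + real k * real n * (ln (real n) - (1 + c))) / (real k * real n)
      = \<psi> (real k) / real k + ln (real n) - (1 + c)"
    using assms by (simp add: field_simps)
  ultimately show ?thesis
    by (simp add: mult.assoc)
qed

lemma log_growth_if_lattice_bound:
  assumes "0 < y" "0 \<le> D"
    and lattice: "\<And>k n. 1 \<le> k \<Longrightarrow> 1 \<le> n \<Longrightarrow>
      \<psi> (real k) / real k + ln (real n) - D \<le> \<psi> (y * real (k * n)) / (y * real (k * n))"
  shows "wphi_star_log_growth (ln (4 * y) + D) 1"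
  unfolding wphi_star_log_growth_def
proof (intro allI impI)
  fix t l :: real assume "1 \<le> t" "1 \<le> l"
  show "\<psi> t / t + ln l - (ln (4 * y) + D) \<le> \<psi> (l * t) / (l * t)"
  proof (cases "4 * y \<le> l")
    case False
    with \<open>1 \<le> l\<close> have "ln l \<le> ln (4 * y)"
      by simp
    moreover have "\<psi> t / t \<le> \<psi> (l * t) / (l * t)"
      using \<open>1 \<le> t\<close> \<open>1 \<le> l\<close> mult_right_mono[of 1 l t] by (intro wphi_star_div_mono) auto
    ultimately show ?thesis
      using assms(2) by linarith
  next
    case True
    then obtain k n where "1 \<le> k" "1 \<le> n" "t \<le> real k" "y * real (k * n) \<le> l * t"
      and "l / (4 * y) \<le> real n"
      using exists_lattice_point_below[OF \<open>1 \<le> t\<close> assms(1)] by blast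
    then have "ln (l / (4 * y)) \<le> ln (real n)"
      using \<open>1 \<le> l\<close> assms(1) by (intro ln_mono) auto
    then have "ln l - ln (4 * y) \<le> ln (real n)"
      using \<open>1 \<le> l\<close> assms(1) by (simp add: ln_div)
    moreover have "\<psi> t / t \<le> \<psi> (real k) / real k"
      using \<open>1 \<le> t\<close> \<open>t \<le> real k\<close> by (intro wphi_star_div_mono) auto
    moreover have "\<psi> (y * real (k * n)) / (y * real (k * n)) \<le> \<psi> (l * t) / (l * t)"
      using \<open>y * real (k * n) \<le> l * t\<close> \<open>1 \<le> k\<close> \<open>1 \<le> n\<close> assms(1)
      by (intro wphi_star_div_mono) auto
    ultimately show ?thesis
      using lattice[OF \<open>1 \<le> k\<close> \<open>1 \<le> n\<close>] by linarith
  qed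
qed

lemma log_growth_if_good_weight:
  assumes "good_weight \<omega>"
  shows "\<exists>c T. 0 < T \<and> wphi_star_log_growth c T"
proof -
  obtain y c where "0 < y"
    and G: "\<And>j m. 1 \<le> j \<Longrightarrow> j \<le> m \<Longrightarrow> log_vartheta 1 j - ln (real j) \<le> c + log_vartheta y m - ln (real m)"
    using assms unfolding good_weight_iff_log_vartheta by (meson zero_less_one)
  then have "log_vartheta 1 j - ln (real j) \<le> max c 0 + log_vartheta y m - ln (real m)"
    if "1 \<le> j" "j \<le> m" for j m
    using that by (smt (verit))
  then have "\<psi> (real k) / real k + ln (real n) - (1 + max c 0) \<le> \<psi> (y * real (k * n)) / (y * real (k * n))"
    if "1 \<le> k" "1 \<le> n" for k n
    using \<open>0 < y\<close> that by (intro wphi_star_lattice_ge) auto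
  then have "wphi_star_log_growth (ln (4 * y) + (1 + max c 0)) 1"
    using \<open>0 < y\<close> by (intro log_growth_if_lattice_bound) auto
  then show ?thesis
    using zero_less_one by blast
qed

end

theorem theorem3p18:
  fixes \<omega> :: "real \<Rightarrow> real"
  assumes "weight_function \<omega>"
    and "normalized_weight \<omega>"
    and "\<forall>x>0. \<exists>y>0. \<exists>A>0. \<forall>k::nat. k \<ge> 1 \<longrightarrow>
           vartheta \<omega> x k \<le> A * W \<omega> y k powr (1 / real k)"
  shows "good_weight \<omega> \<longleftrightarrow> equivalent_weights \<omega> (least_concave_majorant \<omega>)"
proof -
  interpret normalized_weight_function \<omega>
    using assms(1,2) by unfold_locales
  obtain a b where "\<forall>t\<ge>0. \<omega> t \<le> a + b * t"
    using weight_affine_majorant by blast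
  have "good_weight \<omega> \<longleftrightarrow> (\<exists>c T. 0 < T \<and> wphi_star_log_growth c T)"
    using log_growth_if_good_weight good_weight_if_log_growth[OF _ _ assms(3)] by blast
  also have "\<dots> \<longleftrightarrow> dilation_bounded \<omega>"
    using log_growth_if_dilation_bounded dilation_bounded_if_log_growth by blast
  also have "\<dots> \<longleftrightarrow> equivalent_weights \<omega> (least_concave_majorant \<omega>)"
    using equivalent_least_concave_majorant_iff_dilation_bounded[of \<omega> a b]
      \<open>\<forall>t\<ge>0. \<omega> t \<le> a + b * t\<close> weight_nonneg weight_mono by auto
  finally show ?thesis .
qed

end
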